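(* Let $K, G : \mathrm{Per}(\mathbb{R}) \to \mathrm{Per}(\mathbb{R})$ be continuous mappings which can be approximated smoothly by the parameterized families $K_N$ and $G_N$, respectively (in the sense defined in the context). Let $\lambda \geq 0$ be any real number. Define $KG$, $K+G$, $\lambda K$ by $((KG)(\rho))(x) = (K(\rho))(x)\,(G(\rho))(x)$, $((K+G)(\rho))(x) = (K(\rho))(x) + (G(\rho))(x)$, $((\lambda K)(\rho))(x) = \lambda (K(\rho))(x)$ for all $x \in \mathbb{R}$, $\rho \in \mathrm{Per}(\mathbb{R})$. Then $KG$, $K+G$, $\lambda K$ can be approximated smoothly by the parameterized families $K_N G_N$, $K_N + G_N$, $\lambda K_N$, respectively (where $(K_NG_N)(\rho)=K_N(\rho)G_N(\rho)$ etc. for $\rho\in\mathbb{R}^N$).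
   Context: $\mathbb{R}_+ = [0,+\infty)$. $\mathrm{Per}(\mathbb{R})$ denotes the set of continuous, positive functions $\rho:\mathbb{R}\to(0,+\infty)$ that are periodic with period $1$; continuity of maps on $\mathrm{Per}(\mathbb{R})$ is with respect to the uniform (sup) metric. For $y \in \mathbb{R}^N$, $|y|_\infty = \max_i |y_i|$; for $x,y\in\mathbb{R}^N$, $x \le y$ means componentwise; $1_N = (1,\dots,1)^\top$. For $\rho = (\rho_0,\dots,\rho_{N-1})^\top \in \mathbb{R}^N$ and $i=1,\dots,N-1$, $\rho^{(i)} = (\rho_i,\dots,\rho_{N-1},\rho_0,\dots,\rho_{i-1})^\top$, $\rho^{(0)}=\rho$, and in general $\rho^{(k)}$ is obtained by applying the cyclic left shift $k$ times. For $h=1/N$ and $\rho\in\mathbb{R}^N$, $P_N\rho \in \mathrm{Per}(\mathbb{R})$ (for positive $\rho$) is the $1$-periodic function with $(P_N\rho)(x) = h^{-1}\rho_i((i+1)h - x) + h^{-1}\rho_{i+1}(x - ih)$ for $x \in [ih,(i+1)h]$, $i=0,\dots,N-2$, and $(P_N\rho)(x) = h^{-1}\rho_{N-1}(1-x) + h^{-1}\rho_0(x+h-1)$ for $x\in[(N-1)h,1]$ (piecewise linear interpolation of the values $\rho_i$ at the nodes $ih$). Definition (smooth approximation). Let $K:\mathrm{Per}(\mathbb{R})\to\mathrm{Per}(\mathbb{R})$ be continuous and suppose there is $v_{\max}>0$ with $0 \le (K(\rho))(x) \le v_{\max}$ for all $x\in\mathbb{R}$, $\rho \in \mathrm{Per}(\mathbb{R})$.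 A family of mappings $K_N:\mathbb{R}^N\to\mathbb{R}_+$, indexed by integers $N>2$, smoothly approximates $K$ if there exist constants $L,c,C,S\ge 0$ and non-decreasing functions $\gamma,\Gamma,W:\mathbb{R}_+\to\mathbb{R}_+$ such that $K_N(\rho)\le v_{\max}$ for all $\rho\in\mathbb{R}_+^N$, and for all $N>2$, $0<\rho_{\min}\le\rho_{\max}$, $i=0,\dots,N-1$ and all $\rho=(\rho_0,\dots,\rho_{N-1})^\top,\tilde\rho \in\mathbb{R}_+^N$ with $\rho_{\min}1_N\le\rho\le\rho_{\max}1_N$, $\rho_{\min}1_N\le\tilde\rho\le\rho_{\max}1_N$, writing $h=1/N$, $y = h^{-1}(\rho^{(1)}-\rho)$, $\varphi = h^{-2}(\rho^{(2)}-2\rho^{(1)}+\rho)$: (i) $|K_N(\rho)-K_N(\tilde\rho)| \le L|\rho-\tilde\rho|_\infty$; (ii) $|K_N(\rho)-K_N(\rho^{(1)})-K_N(\tilde\rho)+K_N(\tilde\rho^{(1)})| \le (h|\rho-\tilde\rho|_\infty + h^2)\Gamma(\rho_{\max})$; (iii) $-ch(\rho_{\max}-\rho_0) \le K_N(\rho^{(1)})-K_N(\rho) \le ch(\rho_0-\rho_{\min})$; (iv) $|2K_N(\rho^{(1)})-K_N(\rho)-K_N(\rho^{(2)})| \le h^2(\gamma(\rho_{\max}) + C|y|_\infty)$; (v) $|3K_N(\rho^{(1)})+K_N(\rho^{(3)})-K_N(\rho)-3K_N(\rho^{(2)})| \le h^3(W(\rho_{\max}+|y|_\infty) + C|\varphi|_\infty)$;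 (vi) $|(K(P_N\rho))(ih) - K_N(\rho^{(i)})| \le hS\rho_{\max}$. *)

theory Defs
  imports "HOL-Analysis.Analysis"
begin

definition Per :: "(real \<Rightarrow> real) set" where
  "Per = {\<rho>. continuous_on UNIV \<rho> \<and> (\<forall>x. \<rho> x > 0) \<and> (\<forall>x. \<rho> (x + 1) = \<rho> x)}"

definition sup_continuous_on_Per :: "((real \<Rightarrow> real) \<Rightarrow> (real \<Rightarrow> real)) \<Rightarrow> bool" where
  "sup_continuous_on_Per K \<longleftrightarrow>
     (\<forall>\<rho>\<in>Per. \<forall>\<epsilon>>0. \<exists>\<delta>>0. \<forall>\<sigma>\<in>Per.
        (\<forall>x. \<bar>\<rho> x - \<sigma> x\<bar> \<le> \<delta>) \<longrightarrow> (\<forall>x. \<bar>K \<rho> x - K \<sigma> x\<bar> \<le> \<epsilon>))"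

text \<open>Vectors in R^N are real lists of length N; entry i is xs ! i.
  The sup norm |y|_inf = max_i |y_i|.\<close>
definition linf :: "real list \<Rightarrow> real" where
  "linf xs = Max (set (map abs xs))"

text \<open>Piecewise linear periodic interpolation P_N of the node values rho_i at i/N.\<close>
definition PN :: "nat \<Rightarrow> real list \<Rightarrow> real \<Rightarrow> real" where
  "PN N \<rho> x = (let t = x - of_int \<lfloor>x\<rfloor>; i = nat \<lfloor>t * real N\<rfloor>; s = t * real N - real i
               in (1 - s) * \<rho> ! i + s * \<rho> ! ((i + 1) mod N))"

definition smooth_approx ::
  "((real \<Rightarrow> real) \<Rightarrow> (real \<Rightarrow> real)) \<Rightarrow> (nat \<Rightarrow> real list \<Rightarrow> real) \<Rightarrow> bool" where
  "smooth_approx K KN \<longleftrightarrow>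
    (\<forall>\<rho>\<in>Per. continuous_on UNIV (K \<rho>) \<and> (\<forall>x. K \<rho> (x + 1) = K \<rho> x)) \<and>
    sup_continuous_on_Per K \<and>
    (\<forall>N>2. \<forall>\<rho>. length \<rho> = N \<longrightarrow> 0 \<le> KN N \<rho>) \<and>
    (\<exists>vmax>0. (\<forall>\<rho>\<in>Per. \<forall>x. 0 \<le> K \<rho> x \<and> K \<rho> x \<le> vmax) \<and>
      (\<exists>L c C S \<gamma> \<Gamma> W. L \<ge> 0 \<and> c \<ge> 0 \<and> C \<ge> 0 \<and> S \<ge> 0 \<and>
        (\<forall>t\<ge>0. \<gamma> t \<ge> 0 \<and> \<Gamma> t \<ge> 0 \<and> W t \<ge> 0) \<and>
        mono_on {0..} \<gamma> \<and> mono_on {0..} \<Gamma> \<and> mono_on {0..} W \<and>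
        (\<forall>N>2. \<forall>\<rho>. length \<rho> = N \<and> (\<forall>j<N. \<rho> ! j \<ge> 0) \<longrightarrow> KN N \<rho> \<le> vmax) \<and>
        (\<forall>N>2. \<forall>rmin rmax \<rho> \<rho>'. 0 < rmin \<and> rmin \<le> rmax \<and>
           length \<rho> = N \<and> length \<rho>' = N \<and>
           (\<forall>j<N. rmin \<le> \<rho> ! j \<and> \<rho> ! j \<le> rmax) \<and>
           (\<forall>j<N. rmin \<le> \<rho>' ! j \<and> \<rho>' ! j \<le> rmax) \<longrightarrow>
           (let h = 1 / real N;
                y = map (\<lambda>j. (rotate 1 \<rho> ! j - \<rho> ! j) / h) [0..<N];
                phi = map (\<lambda>j. (rotate 2 \<rho> ! j - 2 * rotate 1 \<rho> ! j + \<rho> ! j) / h\<^sup>2) [0..<N];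
                d = linf (map (\<lambda>j. \<rho> ! j - \<rho>' ! j) [0..<N])
            in
             \<bar>KN N \<rho> - KN N \<rho>'\<bar> \<le> L * d \<and>
             \<bar>KN N \<rho> - KN N (rotate 1 \<rho>) - KN N \<rho>' + KN N (rotate 1 \<rho>')\<bar>
                \<le> (h * d + h\<^sup>2) * \<Gamma> rmax \<and>
             - c * h * (rmax - \<rho> ! 0) \<le> KN N (rotate 1 \<rho>) - KN N \<rho> \<and>
             KN N (rotate 1 \<rho>) - KN N \<rho> \<le> c * h * (\<rho> ! 0 - rmin) \<and>
             \<bar>2 * KN N (rotate 1 \<rho>) - KN N \<rho> - KN N (rotate 2 \<rho>)\<bar>
                \<le> h\<^sup>2 * (\<gamma> rmax + C * linf y) \<and>
             \<bar>3 * KN N (rotate 1 \<rho>) + KN N (rotate 3 \<rho>) - KN N \<rho> - 3 * KN N (rotate 2 \<rho>)\<bar>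
                \<le> h ^ 3 * (W (rmax + linf y) + C * linf phi) \<and>
             (\<forall>i<N. \<bar>K (PN N \<rho>) (real i * h) - KN N (rotate i \<rho>)\<bar> \<le> h * S * rmax)))))"

end

theory Submission
  imports Defs
begin

(* Sums are immediate: every estimate in the definition of smooth approximation is additive,
   so the constants and the functions gamma, Gamma, W of K and G simply add up.
   For products, each difference of K_N G_N occurring in (i)-(vi) is expanded by a discrete
   Leibniz rule into differences of K_N and of G_N, weighted by values of the other factor,
   which lie in [0, v_max].  Cross terms are products of two differences; by (iii) a shift
   difference is at most c h rho_max, so these cross terms are of the required order and only
   enlarge gamma, Gamma and W.  The scalar multiple lambda K is the product with the constant
   family lambda.  For (vi) one needs G bounded at P_N rho, i.e. P_N rho in Per(R), which holds
   because the piecewise linear interpolant of positive node values is continuous, positive and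
   periodic. *)

section \<open>Piecewise linear interpolation\<close>

definition lin_interp :: "(int \<Rightarrow> real) \<Rightarrow> real \<Rightarrow> real" where
  "lin_interp a u = (1 - frac u) * a \<lfloor>u\<rfloor> + frac u * a (\<lfloor>u\<rfloor> + 1)"

lemma isCont_lin_interp: "isCont (lin_interp a) u0"
proof -
  define k where "k = \<lfloor>u0\<rfloor>"
  define piece where "piece j u = (1 - (u - of_int j)) * a j + (u - of_int j) * a (j + 1)" for j u
  have lin_interp_piece: "lin_interp a u = piece j u" if "\<lfloor>u\<rfloor> = j" for u j
    using that by (simp add: lin_interp_def piece_def frac_def)
  define g where "g u = (if u \<le> of_int k then piece (k - 1) u else piece k u)" for u
  have "continuous_on UNIV g"
    unfolding g_def piece_def
    by (rule continuous_on_cases_le) (auto intro!: continuous_intros)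
  then have cont_g: "isCont g u0"
    by (simp add: continuous_on_eq_continuous_at)
  have "lin_interp a u = g u" if "u \<in> {of_int k - 1<..<of_int k + 1}" for u
  proof (cases "u < of_int k")
    case True
    then have "\<lfloor>u\<rfloor> = k - 1" using that by (simp add: floor_eq_iff)
    then show ?thesis using True by (simp add: lin_interp_piece g_def)
  next
    case False
    then have "\<lfloor>u\<rfloor> = k" using that by (simp add: floor_eq_iff)
    then show ?thesis using False by (auto simp: lin_interp_piece g_def piece_def)
  qed
  moreover have "\<forall>\<^sub>F u in nhds u0. u \<in> {of_int k - 1<..<of_int k + 1}"
    by (rule eventually_nhds_in_open) (auto simp: k_def, linarith)
  ultimately have "\<forall>\<^sub>F u in nhds u0. lin_interp a u = g u"
    by (auto elim: eventually_mono)
  with cont_g show ?thesis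
    using isCont_cong by blast
qed

lemma lin_interp_pos:
  assumes "\<And>k. 0 < a k"
  shows "0 < lin_interp a u"
proof -
  have "0 < (1 - frac u) * a \<lfloor>u\<rfloor>"
    using assms frac_lt_1[of u] by simp
  moreover have "0 \<le> frac u * a (\<lfloor>u\<rfloor> + 1)"
    using assms[of "\<lfloor>u\<rfloor> + 1"] by simp
  ultimately show ?thesis
    unfolding lin_interp_def by linarith
qed

lemma lin_interp_periodic:
  assumes "\<And>k. a (k + p) = a k"
  shows "lin_interp a (u + of_int p) = lin_interp a u"
  using assms[of "\<lfloor>u\<rfloor>"] assms[of "\<lfloor>u\<rfloor> + 1"]
  by (simp add: lin_interp_def frac_def add.commute add.left_commute)

lemma PN_eq_lin_interp:
  assumes "N > 0"
  shows "PN N \<rho> x = lin_interp (\<lambda>k. \<rho> ! nat (k mod int N)) (real N * x)"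
proof -
  define m where "m = \<lfloor>real N * x\<rfloor>"
  define i where "i = nat \<lfloor>frac x * real N\<rfloor>"
  have "frac x * real N = real N * x - of_int (int N * \<lfloor>x\<rfloor>)"
    by (simp add: frac_def algebra_simps)
  then have floor_eq: "\<lfloor>frac x * real N\<rfloor> = m - int N * \<lfloor>x\<rfloor>"
    unfolding m_def by (simp only: floor_diff_of_int)
  have "0 \<le> \<lfloor>frac x * real N\<rfloor>" "\<lfloor>frac x * real N\<rfloor> < int N"
    using frac_lt_1[of x] assms by (simp_all add: floor_less_iff)
  then have i: "int i = m - int N * \<lfloor>x\<rfloor>" "i < N"
    using floor_eq by (auto simp: i_def)
  then have "m = int i + int N * \<lfloor>x\<rfloor>"
    by simp
  then have m_mod: "m mod int N = int i"
    using i(2) by (simp add: zmod_int)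
  have "(m + 1) mod int N = (m mod int N + 1) mod int N"
    by (simp add: mod_add_left_eq)
  also have "\<dots> = int ((i + 1) mod N)"
    using m_mod by (simp add: zmod_int add.commute)
  finally have "nat ((m + 1) mod int N) = (i + 1) mod N"
    by simp
  moreover have "real i = of_int m - real N * of_int \<lfloor>x\<rfloor>"
    using arg_cong[OF i(1), of real_of_int] by simp
  then have "frac x * real N - real i = frac (real N * x)"
    by (simp add: frac_def m_def algebra_simps)
  ultimately show ?thesis
    unfolding PN_def lin_interp_def Let_def m_def[symmetric] frac_def[of x, symmetric]
      i_def[symmetric]
    using m_mod by simp
qed

lemma PN_in_Per:
  assumes "N > 0" "length \<rho> = N" "\<And>j. j < N \<Longrightarrow> 0 < \<rho> ! j"
  shows "PN N \<rho> \<in> Per"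
proof -
  define a where "a = (\<lambda>k. \<rho> ! nat (k mod int N))"
  have PN_eq: "PN N \<rho> = (\<lambda>x. lin_interp a (real N * x))"
    using PN_eq_lin_interp[OF assms(1)] by (auto simp: a_def)
  have "0 < a k" for k
    using assms by (simp add: a_def nat_less_iff)
  moreover have "a (k + int N) = a k" for k
    by (simp add: a_def)
  moreover have "continuous_on UNIV (\<lambda>x. lin_interp a (real N * x))"
    by (intro continuous_at_imp_continuous_on ballI
        continuous_at_compose[of _ "\<lambda>x. real N * x" "lin_interp a", unfolded o_def]
        continuous_intros isCont_lin_interp)
  ultimately show ?thesis
    unfolding Per_def PN_eq
    using lin_interp_periodic[of a "int N"] by (auto simp: distrib_left lin_interp_pos)
qed

section \<open>Discrete Leibniz rules\<close>

lemma abs_add_le: "\<bar>x\<bar> \<le> a \<Longrightarrow> \<bar>y\<bar> \<le> b \<Longrightarrow> \<bar>x + y\<bar> \<le> a + (b::real)"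
  by (rule order_trans[OF abs_triangle_ineq add_mono])

lemma abs_mult_le_mult: "\<bar>x\<bar> \<le> a \<Longrightarrow> \<bar>y\<bar> \<le> b \<Longrightarrow> \<bar>x * y\<bar> \<le> a * (b::real)"
  by (simp add: abs_mult mult_mono')

lemma abs_mult_diff_le:
  fixes a a' b b' :: real
  assumes "\<bar>a'\<bar> \<le> A" "\<bar>b\<bar> \<le> B" "\<bar>a - a'\<bar> \<le> e" "\<bar>b - b'\<bar> \<le> e'"
  shows "\<bar>a * b - a' * b'\<bar> \<le> e * B + A * e'"
proof -
  have "a * b - a' * b' = (a - a') * b + a' * (b - b')"
    by (simp add: algebra_simps)
  moreover have "\<bar>(a - a') * b\<bar> \<le> e * B" "\<bar>a' * (b - b')\<bar> \<le> A * e'"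
    using assms by (auto intro: abs_mult_le_mult)
  ultimately show ?thesis
    by linarith
qed

lemma mult_le_mult_bounds: "x \<le> X \<Longrightarrow> 0 \<le> X \<Longrightarrow> 0 \<le> y \<Longrightarrow> y \<le> Y \<Longrightarrow> x * y \<le> X * (Y::real)"
  by (meson mult_mono mult_right_mono order_trans)

lemma mult_diff_bounds:
  fixes k k' g g' :: real
  assumes "- e \<le> k' - k" "k' - k \<le> E" "- e' \<le> g' - g" "g' - g \<le> E'"
    and "0 \<le> k" "k \<le> A" "0 \<le> g'" "g' \<le> B" "0 \<le> e" "0 \<le> E" "0 \<le> e'" "0 \<le> E'"
  shows "- (e * B + A * e') \<le> k' * g' - k * g" "k' * g' - k * g \<le> E * B + A * E'"
proof -
  have split: "k' * g' - k * g = (k' - k) * g' + (g' - g) * k"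
    by (simp add: algebra_simps)
  have "(k' - k) * g' \<le> E * B" "(g' - g) * k \<le> E' * A"
    using assms by (auto intro: mult_le_mult_bounds)
  then show "k' * g' - k * g \<le> E * B + A * E'"
    unfolding split by (simp add: mult.commute)
  have "- (k' - k) * g' \<le> e * B" "- (g' - g) * k \<le> e' * A"
    using assms by (auto intro: mult_le_mult_bounds)
  then show "- (e * B + A * e') \<le> k' * g' - k * g"
    unfolding split by (simp add: algebra_simps)
qed

lemma abs_mixed_diff_mult_le:
  fixes f0 f1 f0' f1' g0 g1 g0' g1' :: real
  assumes "\<bar>f0 - f1 - f0' + f1'\<bar> \<le> E" "\<bar>g0 - g1 - g0' + g1'\<bar> \<le> E'"
    and "\<bar>f0' - f1'\<bar> \<le> e" "\<bar>g0 - g0'\<bar> \<le> d'" "\<bar>g0' - g1'\<bar> \<le> e'" "\<bar>f1 - f1'\<bar> \<le> d"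
    and "\<bar>g0\<bar> \<le> B" "\<bar>f1\<bar> \<le> A"
  shows "\<bar>f0 * g0 - f1 * g1 - f0' * g0' + f1' * g1'\<bar> \<le> E * B + e * d' + A * E' + e' * d"
proof -
  have "f0 * g0 - f1 * g1 - f0' * g0' + f1' * g1'
      = (f0 - f1 - f0' + f1') * g0 + (f0' - f1') * (g0 - g0')
        + f1 * (g0 - g1 - g0' + g1') + (g0' - g1') * (f1 - f1')"
    by (simp add: algebra_simps)
  moreover have "\<bar>(f0 - f1 - f0' + f1') * g0\<bar> \<le> E * B" "\<bar>(f0' - f1') * (g0 - g0')\<bar> \<le> e * d'"
    "\<bar>f1 * (g0 - g1 - g0' + g1')\<bar> \<le> A * E'" "\<bar>(g0' - g1') * (f1 - f1')\<bar> \<le> e' * d"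
    using assms by (auto intro: abs_mult_le_mult)
  ultimately show ?thesis
    by linarith
qed

lemma abs_second_diff_mult_le:
  fixes f0 f1 f2 g0 g1 g2 :: real
  assumes "\<bar>2 * f1 - f0 - f2\<bar> \<le> E" "\<bar>2 * g1 - g0 - g2\<bar> \<le> E'"
    and "\<bar>f1 - f0\<bar> \<le> e" "\<bar>f2 - f1\<bar> \<le> e" "\<bar>g1 - g0\<bar> \<le> e'" "\<bar>g2 - g1\<bar> \<le> e'"
    and "\<bar>f1\<bar> \<le> A" "\<bar>g1\<bar> \<le> B"
  shows "\<bar>2 * (f1 * g1) - f0 * g0 - f2 * g2\<bar> \<le> A * E' + B * E + 2 * (e * e')"
proof -
  have "2 * (f1 * g1) - f0 * g0 - f2 * g2
      = f1 * (2 * g1 - g0 - g2) + g1 * (2 * f1 - f0 - f2)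
        - (f1 - f0) * (g1 - g0) - (f2 - f1) * (g2 - g1)"
    by (simp add: algebra_simps)
  moreover have "\<bar>f1 * (2 * g1 - g0 - g2)\<bar> \<le> A * E'" "\<bar>g1 * (2 * f1 - f0 - f2)\<bar> \<le> B * E"
    "\<bar>(f1 - f0) * (g1 - g0)\<bar> \<le> e * e'" "\<bar>(f2 - f1) * (g2 - g1)\<bar> \<le> e * e'"
    using assms by (auto intro: abs_mult_le_mult)
  ultimately show ?thesis
    by linarith
qed

lemma abs_third_diff_mult_le:
  fixes f0 f1 f2 f3 g0 g1 g2 g3 :: real
  assumes "\<bar>3 * f1 + f3 - f0 - 3 * f2\<bar> \<le> E3" "\<bar>3 * g1 + g3 - g0 - 3 * g2\<bar> \<le> E3'"
    and "\<bar>2 * f1 - f0 - f2\<bar> \<le> E2" "\<bar>2 * g2 - g1 - g3\<bar> \<le> E2'"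
    and "\<bar>f1 - f0\<bar> \<le> e" "\<bar>g3 - g2\<bar> \<le> e'" "\<bar>f0\<bar> \<le> A" "\<bar>g3\<bar> \<le> B"
  shows "\<bar>3 * (f1 * g1) + f3 * g3 - f0 * g0 - 3 * (f2 * g2)\<bar>
    \<le> A * E3' + 3 * (e * E2') + 3 * (E2 * e') + E3 * B"
proof -
  have "3 * (f1 * g1) + f3 * g3 - f0 * g0 - 3 * (f2 * g2)
      = f0 * (3 * g1 + g3 - g0 - 3 * g2) + 3 * ((f1 - f0) * - (2 * g2 - g1 - g3))
        + 3 * (- (2 * f1 - f0 - f2) * (g3 - g2)) + (3 * f1 + f3 - f0 - 3 * f2) * g3"
    by (simp add: algebra_simps)
  moreover have "\<bar>f0 * (3 * g1 + g3 - g0 - 3 * g2)\<bar> \<le> A * E3'"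
    "\<bar>(f1 - f0) * - (2 * g2 - g1 - g3)\<bar> \<le> e * E2'" "\<bar>- (2 * f1 - f0 - f2) * (g3 - g2)\<bar> \<le> E2 * e'"
    "\<bar>(3 * f1 + f3 - f0 - 3 * f2) * g3\<bar> \<le> E3 * B"
    using assms by (auto intro: abs_mult_le_mult)
  ultimately show ?thesis
    by linarith
qed

definition in_box :: "nat \<Rightarrow> real \<Rightarrow> real \<Rightarrow> real list \<Rightarrow> bool" where
  "in_box N rmin rmax \<rho> \<longleftrightarrow> length \<rho> = N \<and> (\<forall>j<N. rmin \<le> \<rho> ! j \<and> \<rho> ! j \<le> rmax)"

definition dist_linf :: "nat \<Rightarrow> real list \<Rightarrow> real list \<Rightarrow> real" where
  "dist_linf N \<rho> \<rho>' = linf (map (\<lambda>j. \<rho> ! j - \<rho>' ! j) [0..<N])"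

abbreviation mesh :: "nat \<Rightarrow> real" where
  "mesh N \<equiv> 1 / real N"

definition linf_diff1 :: "nat \<Rightarrow> real list \<Rightarrow> real" where
  "linf_diff1 N \<rho> = linf (map (\<lambda>j. (rotate 1 \<rho> ! j - \<rho> ! j) / mesh N) [0..<N])"

definition linf_diff2 :: "nat \<Rightarrow> real list \<Rightarrow> real" where
  "linf_diff2 N \<rho> =
     linf (map (\<lambda>j. (rotate 2 \<rho> ! j - 2 * rotate 1 \<rho> ! j + \<rho> ! j) / (mesh N)\<^sup>2) [0..<N])"

lemma linf_nonneg: "xs \<noteq> [] \<Longrightarrow> 0 \<le> linf xs"
  unfolding linf_def by (metis Max_ge abs_ge_zero dual_order.trans finite_set image_eqI
      list.set_map nth_mem length_greater_0_conv)

lemma linf_rotate: "linf (rotate k xs) = linf xs"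
  unfolding linf_def by (simp add: rotate_map[symmetric])

lemma map_nth_rotate:
  assumes "length xs = N" "length ys = N"
  shows "map (\<lambda>j. f (rotate k xs ! j) (rotate k ys ! j)) [0..<N]
    = rotate k (map (\<lambda>j. f (xs ! j) (ys ! j)) [0..<N])"
  by (rule nth_equalityI) (auto simp: assms nth_rotate)

lemma dist_linf_rotate:
  "length \<rho> = N \<Longrightarrow> length \<rho>' = N \<Longrightarrow> dist_linf N (rotate k \<rho>) (rotate k \<rho>') = dist_linf N \<rho> \<rho>'"
  unfolding dist_linf_def by (simp add: map_nth_rotate[of \<rho> N \<rho>' "\<lambda>a b. a - b"] linf_rotate)

lemma linf_diff1_rotate:
  assumes "length \<rho> = N"
  shows "linf_diff1 N (rotate k \<rho>) = linf_diff1 N \<rho>"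
proof -
  have "rotate 1 (rotate k \<rho>) = rotate k (rotate 1 \<rho>)"
    by (simp only: rotate_rotate add.commute)
  then show ?thesis
    unfolding linf_diff1_def
    using map_nth_rotate[of "rotate 1 \<rho>" N \<rho> "\<lambda>a b. (a - b) / mesh N" k] assms
    by (simp add: linf_rotate)
qed

lemma linf_diff1_nonneg: "N > 0 \<Longrightarrow> 0 \<le> linf_diff1 N \<rho>"
  unfolding linf_diff1_def by (rule linf_nonneg) simp

lemma in_box_rotate: "in_box N rmin rmax \<rho> \<Longrightarrow> in_box N rmin rmax (rotate k \<rho>)"
  unfolding in_box_def by (auto simp: nth_rotate)

section \<open>Smooth approximation with explicit constants\<close>

locale smooth_approx_with =
  fixes K :: "(real \<Rightarrow> real) \<Rightarrow> real \<Rightarrow> real" and KN :: "nat \<Rightarrow> real list \<Rightarrow> real"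
    and vmax L c C S :: real and \<gamma> \<Gamma> W :: "real \<Rightarrow> real"
  assumes continuous: "\<sigma> \<in> Per \<Longrightarrow> continuous_on UNIV (K \<sigma>)"
    and periodic: "\<sigma> \<in> Per \<Longrightarrow> K \<sigma> (x + 1) = K \<sigma> x"
    and sup_continuous: "sup_continuous_on_Per K"
    and KN_nonneg: "N > 2 \<Longrightarrow> length \<rho> = N \<Longrightarrow> 0 \<le> KN N \<rho>"
    and vmax_pos: "0 < vmax"
    and K_nonneg: "\<sigma> \<in> Per \<Longrightarrow> 0 \<le> K \<sigma> x"
    and K_le_vmax: "\<sigma> \<in> Per \<Longrightarrow> K \<sigma> x \<le> vmax"
    and consts_nonneg: "0 \<le> L" "0 \<le> c" "0 \<le> C" "0 \<le> S"
    and funs_nonneg: "0 \<le> t \<Longrightarrow> 0 \<le> \<gamma> t" "0 \<le> t \<Longrightarrow> 0 \<le> \<Gamma> t" "0 \<le> t \<Longrightarrow> 0 \<le> W t"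
    and funs_mono: "mono_on {0..} \<gamma>" "mono_on {0..} \<Gamma>" "mono_on {0..} W"
    and KN_le_vmax: "N > 2 \<Longrightarrow> length \<rho> = N \<Longrightarrow> \<forall>j<N. 0 \<le> \<rho> ! j \<Longrightarrow> KN N \<rho> \<le> vmax"
    and lipschitz: "N > 2 \<Longrightarrow> 0 < rmin \<Longrightarrow> rmin \<le> rmax \<Longrightarrow>
      in_box N rmin rmax \<rho> \<Longrightarrow> in_box N rmin rmax \<rho>' \<Longrightarrow>
      \<bar>KN N \<rho> - KN N \<rho>'\<bar> \<le> L * dist_linf N \<rho> \<rho>'"
    and mixed_diff: "N > 2 \<Longrightarrow> 0 < rmin \<Longrightarrow> rmin \<le> rmax \<Longrightarrow>
      in_box N rmin rmax \<rho> \<Longrightarrow> in_box N rmin rmax \<rho>' \<Longrightarrow>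
      \<bar>KN N \<rho> - KN N (rotate 1 \<rho>) - KN N \<rho>' + KN N (rotate 1 \<rho>')\<bar>
        \<le> (mesh N * dist_linf N \<rho> \<rho>' + (mesh N)\<^sup>2) * \<Gamma> rmax"
    and shift_diff_lower: "N > 2 \<Longrightarrow> 0 < rmin \<Longrightarrow> rmin \<le> rmax \<Longrightarrow> in_box N rmin rmax \<rho> \<Longrightarrow>
      - c * mesh N * (rmax - \<rho> ! 0) \<le> KN N (rotate 1 \<rho>) - KN N \<rho>"
    and shift_diff_upper: "N > 2 \<Longrightarrow> 0 < rmin \<Longrightarrow> rmin \<le> rmax \<Longrightarrow> in_box N rmin rmax \<rho> \<Longrightarrow>
      KN N (rotate 1 \<rho>) - KN N \<rho> \<le> c * mesh N * (\<rho> ! 0 - rmin)"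
    and second_diff: "N > 2 \<Longrightarrow> 0 < rmin \<Longrightarrow> rmin \<le> rmax \<Longrightarrow> in_box N rmin rmax \<rho> \<Longrightarrow>
      \<bar>2 * KN N (rotate 1 \<rho>) - KN N \<rho> - KN N (rotate 2 \<rho>)\<bar>
        \<le> (mesh N)\<^sup>2 * (\<gamma> rmax + C * linf_diff1 N \<rho>)"
    and third_diff: "N > 2 \<Longrightarrow> 0 < rmin \<Longrightarrow> rmin \<le> rmax \<Longrightarrow> in_box N rmin rmax \<rho> \<Longrightarrow>
      \<bar>3 * KN N (rotate 1 \<rho>) + KN N (rotate 3 \<rho>) - KN N \<rho> - 3 * KN N (rotate 2 \<rho>)\<bar>
        \<le> mesh N ^ 3 * (W (rmax + linf_diff1 N \<rho>) + C * linf_diff2 N \<rho>)"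
    and node_error: "N > 2 \<Longrightarrow> 0 < rmin \<Longrightarrow> rmin \<le> rmax \<Longrightarrow> in_box N rmin rmax \<rho> \<Longrightarrow>
      i < N \<Longrightarrow> \<bar>K (PN N \<rho>) (real i * mesh N) - KN N (rotate i \<rho>)\<bar> \<le> mesh N * S * rmax"

lemma in_box_pair_iff:
  "(0 < rmin \<and> rmin \<le> rmax \<and> length \<rho> = N \<and> length \<rho>' = N \<and>
      (\<forall>j<N. rmin \<le> \<rho> ! j \<and> \<rho> ! j \<le> rmax) \<and> (\<forall>j<N. rmin \<le> \<rho>' ! j \<and> \<rho>' ! j \<le> rmax))
    \<longleftrightarrow> 0 < rmin \<and> rmin \<le> rmax \<and> in_box N rmin rmax \<rho> \<and> in_box N rmin rmax \<rho>'"
  by (auto simp: in_box_def)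

context smooth_approx_with
begin

lemma smooth_approx: "smooth_approx K KN"
  unfolding smooth_approx_def Let_def in_box_pair_iff dist_linf_def[symmetric]
    linf_diff1_def[symmetric] linf_diff2_def[symmetric]
  apply (intro conjI ballI allI impI)
  prefer 5
  apply (rule exI[of _ vmax], intro conjI ballI allI impI)
  prefer 4
  apply (rule exI[of _ L], rule exI[of _ c], rule exI[of _ C], rule exI[of _ S],
      rule exI[of _ \<gamma>], rule exI[of _ \<Gamma>], rule exI[of _ W])
  apply (intro conjI ballI allI impI)
  apply (rule continuous periodic sup_continuous KN_nonneg vmax_pos K_nonneg K_le_vmax
      consts_nonneg funs_nonneg funs_mono KN_le_vmax lipschitz mixed_diff shift_diff_lower
      shift_diff_upper second_diff third_diff node_error; auto simp: in_box_def)+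
  done

lemma vmax_nonneg: "0 \<le> vmax"
  using vmax_pos by simp

lemma abs_K_le_vmax: "\<sigma> \<in> Per \<Longrightarrow> \<bar>K \<sigma> x\<bar> \<le> vmax"
  using K_nonneg K_le_vmax by simp

lemma KN_in_box_bounds:
  assumes "N > 2" "0 < rmin" "in_box N rmin rmax \<rho>"
  shows "0 \<le> KN N \<rho>" "KN N \<rho> \<le> vmax" "\<bar>KN N \<rho>\<bar> \<le> vmax"
proof -
  have "length \<rho> = N" "\<forall>j<N. 0 \<le> \<rho> ! j"
    using assms(2,3) unfolding in_box_def by force+
  then show "0 \<le> KN N \<rho>" "KN N \<rho> \<le> vmax" "\<bar>KN N \<rho>\<bar> \<le> vmax"
    using KN_nonneg KN_le_vmax assms(1) by auto
qed

lemma abs_shift_diff_le: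
  assumes "N > 2" "0 < rmin" "rmin \<le> rmax" "in_box N rmin rmax \<rho>"
  shows "\<bar>KN N (rotate 1 \<rho>) - KN N \<rho>\<bar> \<le> c * mesh N * rmax"
proof -
  have "rmin \<le> \<rho> ! 0" "\<rho> ! 0 \<le> rmax"
    using assms(1,4) unfolding in_box_def by auto
  then have "c * mesh N * (\<rho> ! 0 - rmin) \<le> c * mesh N * rmax"
    "c * mesh N * (rmax - \<rho> ! 0) \<le> c * mesh N * rmax"
    using assms(2) consts_nonneg(2) by (intro mult_left_mono; simp)+
  then show ?thesis
    using shift_diff_lower[OF assms] shift_diff_upper[OF assms] by (simp add: abs_le_iff)
qed

lemma second_diff_bound_mono:
  assumes "0 \<le> r" "r \<le> t" "0 \<le> y" "y \<le> t"
  shows "r * (\<gamma> r + C * y) \<le> t * (\<gamma> t + C * t)"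
  using assms funs_nonneg(1)[of r] mono_onD[OF funs_mono(1), of r t] consts_nonneg(3)
  by (intro mult_mono add_mono mult_left_mono) auto

end

lemma smooth_approx_iff_with:
  "smooth_approx K KN \<longleftrightarrow> (\<exists>vmax L c C S \<gamma> \<Gamma> W. smooth_approx_with K KN vmax L c C S \<gamma> \<Gamma> W)"
proof
  show "smooth_approx K KN \<Longrightarrow> \<exists>vmax L c C S \<gamma> \<Gamma> W. smooth_approx_with K KN vmax L c C S \<gamma> \<Gamma> W"
    unfolding smooth_approx_def Let_def in_box_pair_iff dist_linf_def[symmetric]
      linf_diff1_def[symmetric] linf_diff2_def[symmetric]
  proof (elim conjE exE, goal_cases)
    case (1 vmax L c C S \<gamma> \<Gamma> W)
    show ?case
      by (rule exI[of _ vmax], rule exI[of _ L], rule exI[of _ c], rule exI[of _ C],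
          rule exI[of _ S], rule exI[of _ \<gamma>], rule exI[of _ \<Gamma>], rule exI[of _ W],
          rule smooth_approx_with.intro) (use 1 in simp_all)
  qed
qed (auto intro: smooth_approx_with.smooth_approx)

section \<open>Closure under sums and products\<close>

lemma sup_continuous_on_Per_add:
  assumes K: "sup_continuous_on_Per K" and G: "sup_continuous_on_Per G"
  shows "sup_continuous_on_Per (\<lambda>\<rho> x. K \<rho> x + G \<rho> x)"
  unfolding sup_continuous_on_Per_def
proof (intro ballI allI impI)
  fix \<rho> and \<epsilon> :: real
  assume \<rho>: "\<rho> \<in> Per" and "\<epsilon> > 0"
  then have "\<epsilon> / 2 > 0"
    by simp
  obtain dK where "dK > 0"
    and dK: "\<And>\<sigma> x. \<sigma> \<in> Per \<Longrightarrow> \<forall>x. \<bar>\<rho> x - \<sigma> x\<bar> \<le> dK \<Longrightarrow> \<bar>K \<rho> x - K \<sigma> x\<bar> \<le> \<epsilon> / 2"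
    using K \<rho> \<open>\<epsilon> / 2 > 0\<close> unfolding sup_continuous_on_Per_def by blast
  obtain dG where "dG > 0"
    and dG: "\<And>\<sigma> x. \<sigma> \<in> Per \<Longrightarrow> \<forall>x. \<bar>\<rho> x - \<sigma> x\<bar> \<le> dG \<Longrightarrow> \<bar>G \<rho> x - G \<sigma> x\<bar> \<le> \<epsilon> / 2"
    using G \<rho> \<open>\<epsilon> / 2 > 0\<close> unfolding sup_continuous_on_Per_def by blast
  have "\<bar>K \<rho> x + G \<rho> x - (K \<sigma> x + G \<sigma> x)\<bar> \<le> \<epsilon>"
    if "\<sigma> \<in> Per" "\<forall>x. \<bar>\<rho> x - \<sigma> x\<bar> \<le> min dK dG" for \<sigma> x
  proof -
    have "\<bar>K \<rho> x - K \<sigma> x\<bar> \<le> \<epsilon> / 2" "\<bar>G \<rho> x - G \<sigma> x\<bar> \<le> \<epsilon> / 2"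
      using that(2) by (intro dK[OF that(1)] dG[OF that(1)]; simp)+
    then show ?thesis
      by linarith
  qed
  then show "\<exists>\<delta>>0. \<forall>\<sigma>\<in>Per. (\<forall>x. \<bar>\<rho> x - \<sigma> x\<bar> \<le> \<delta>) \<longrightarrow>
      (\<forall>x. \<bar>K \<rho> x + G \<rho> x - (K \<sigma> x + G \<sigma> x)\<bar> \<le> \<epsilon>)"
    using \<open>dK > 0\<close> \<open>dG > 0\<close> by (intro exI[of _ "min dK dG"]) auto
qed

lemma sup_continuous_on_Per_mult:
  assumes K: "sup_continuous_on_Per K" and G: "sup_continuous_on_Per G"
    and K_bound: "\<And>\<sigma> x. \<sigma> \<in> Per \<Longrightarrow> \<bar>K \<sigma> x\<bar> \<le> A" and "A > 0"
    and G_bound: "\<And>\<sigma> x. \<sigma> \<in> Per \<Longrightarrow> \<bar>G \<sigma> x\<bar> \<le> B" and "B > 0"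
  shows "sup_continuous_on_Per (\<lambda>\<rho> x. K \<rho> x * G \<rho> x)"
  unfolding sup_continuous_on_Per_def
proof (intro ballI allI impI)
  fix \<rho> and \<epsilon> :: real
  assume \<rho>: "\<rho> \<in> Per" and "\<epsilon> > 0"
  then have "\<epsilon> / (2 * B) > 0" "\<epsilon> / (2 * A) > 0"
    using \<open>A > 0\<close> \<open>B > 0\<close> by auto
  obtain dK where "dK > 0" and dK: "\<And>\<sigma> x. \<sigma> \<in> Per \<Longrightarrow> \<forall>x. \<bar>\<rho> x - \<sigma> x\<bar> \<le> dK \<Longrightarrow>
      \<bar>K \<rho> x - K \<sigma> x\<bar> \<le> \<epsilon> / (2 * B)"
    using K \<rho> \<open>\<epsilon> / (2 * B) > 0\<close> unfolding sup_continuous_on_Per_def by blast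
  obtain dG where "dG > 0" and dG: "\<And>\<sigma> x. \<sigma> \<in> Per \<Longrightarrow> \<forall>x. \<bar>\<rho> x - \<sigma> x\<bar> \<le> dG \<Longrightarrow>
      \<bar>G \<rho> x - G \<sigma> x\<bar> \<le> \<epsilon> / (2 * A)"
    using G \<rho> \<open>\<epsilon> / (2 * A) > 0\<close> unfolding sup_continuous_on_Per_def by blast
  have "\<bar>K \<rho> x * G \<rho> x - K \<sigma> x * G \<sigma> x\<bar> \<le> \<epsilon>"
    if "\<sigma> \<in> Per" "\<forall>x. \<bar>\<rho> x - \<sigma> x\<bar> \<le> min dK dG" for \<sigma> x
  proof -
    have "\<bar>K \<rho> x - K \<sigma> x\<bar> \<le> \<epsilon> / (2 * B)" "\<bar>G \<rho> x - G \<sigma> x\<bar> \<le> \<epsilon> / (2 * A)"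
      using that(2) by (intro dK[OF that(1)] dG[OF that(1)]; simp)+
    then have "\<bar>K \<rho> x * G \<rho> x - K \<sigma> x * G \<sigma> x\<bar> \<le> \<epsilon> / (2 * B) * B + A * (\<epsilon> / (2 * A))"
      by (intro abs_mult_diff_le K_bound G_bound \<rho> that(1))
    then show ?thesis
      using \<open>A > 0\<close> \<open>B > 0\<close> by simp
  qed
  then show "\<exists>\<delta>>0. \<forall>\<sigma>\<in>Per. (\<forall>x. \<bar>\<rho> x - \<sigma> x\<bar> \<le> \<delta>) \<longrightarrow>
      (\<forall>x. \<bar>K \<rho> x * G \<rho> x - K \<sigma> x * G \<sigma> x\<bar> \<le> \<epsilon>)"
    using \<open>dK > 0\<close> \<open>dG > 0\<close> by (intro exI[of _ "min dK dG"]) auto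
qed

lemma mono_on_add: "mono_on S f \<Longrightarrow> mono_on S g \<Longrightarrow> mono_on S (\<lambda>x. f x + (g x :: real))"
  by (auto simp: mono_on_def intro: add_mono)

lemma mono_on_cmult: "0 \<le> a \<Longrightarrow> mono_on S f \<Longrightarrow> mono_on S (\<lambda>x. a * (f x :: real))"
  by (auto simp: mono_on_def intro: mult_left_mono)

locale smooth_approx_pair =
  K: smooth_approx_with K KN vK LK cK CK SK \<gamma>K \<Gamma>K WK +
  G: smooth_approx_with G GN vG LG cG CG SG \<gamma>G \<Gamma>G WG
  for K KN vK LK cK CK SK \<gamma>K \<Gamma>K WK G GN vG LG cG CG SG \<gamma>G \<Gamma>G WG
begin

lemma mult_lipschitz:
  assumes "N > 2" "0 < rmin" "rmin \<le> rmax" "in_box N rmin rmax \<rho>" "in_box N rmin rmax \<rho>'"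
  shows "\<bar>KN N \<rho> * GN N \<rho> - KN N \<rho>' * GN N \<rho>'\<bar> \<le> (vG * LK + vK * LG) * dist_linf N \<rho> \<rho>'"
proof -
  have "\<bar>KN N \<rho> * GN N \<rho> - KN N \<rho>' * GN N \<rho>'\<bar>
      \<le> LK * dist_linf N \<rho> \<rho>' * vG + vK * (LG * dist_linf N \<rho> \<rho>')"
    using K.KN_in_box_bounds(3)[OF assms(1,2,5)] G.KN_in_box_bounds(3)[OF assms(1,2,4)]
      K.lipschitz[OF assms] G.lipschitz[OF assms]
    by (rule abs_mult_diff_le)
  then show ?thesis
    by (simp add: algebra_simps)
qed

lemma mult_mixed_diff:
  assumes "N > 2" "0 < rmin" "rmin \<le> rmax" "in_box N rmin rmax \<rho>" "in_box N rmin rmax \<rho>'"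
  shows "\<bar>KN N \<rho> * GN N \<rho> - KN N (rotate 1 \<rho>) * GN N (rotate 1 \<rho>)
      - KN N \<rho>' * GN N \<rho>' + KN N (rotate 1 \<rho>') * GN N (rotate 1 \<rho>')\<bar>
    \<le> (mesh N * dist_linf N \<rho> \<rho>' + (mesh N)\<^sup>2)
      * (vG * \<Gamma>K rmax + vK * \<Gamma>G rmax + (cK * LG + cG * LK) * rmax)"
proof -
  define h d where "h = mesh N" and "d = dist_linf N \<rho> \<rho>'"
  have "length \<rho> = N" "length \<rho>' = N"
    using assms(4,5) by (simp_all add: in_box_def)
  then have d_rotate: "dist_linf N (rotate 1 \<rho>) (rotate 1 \<rho>') = d"
    unfolding d_def by (rule dist_linf_rotate)
  note rotated = in_box_rotate[OF assms(4), of 1] in_box_rotate[OF assms(5), of 1]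
  have "\<bar>KN N \<rho> * GN N \<rho> - KN N (rotate 1 \<rho>) * GN N (rotate 1 \<rho>)
      - KN N \<rho>' * GN N \<rho>' + KN N (rotate 1 \<rho>') * GN N (rotate 1 \<rho>')\<bar>
    \<le> (h * d + h\<^sup>2) * \<Gamma>K rmax * vG + cK * h * rmax * (LG * d)
      + vK * ((h * d + h\<^sup>2) * \<Gamma>G rmax) + cG * h * rmax * (LK * d)"
  proof (rule abs_mixed_diff_mult_le)
    show "\<bar>KN N \<rho>' - KN N (rotate 1 \<rho>')\<bar> \<le> cK * h * rmax"
      using K.abs_shift_diff_le[OF assms(1-3,5)] by (simp add: h_def abs_minus_commute)
    show "\<bar>GN N \<rho>' - GN N (rotate 1 \<rho>')\<bar> \<le> cG * h * rmax"
      using G.abs_shift_diff_le[OF assms(1-3,5)] by (simp add: h_def abs_minus_commute)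
    show "\<bar>KN N (rotate 1 \<rho>) - KN N (rotate 1 \<rho>')\<bar> \<le> LK * d"
      using K.lipschitz[OF assms(1-3) rotated] unfolding d_rotate .
  qed (use K.mixed_diff[OF assms] G.mixed_diff[OF assms] G.lipschitz[OF assms]
        G.KN_in_box_bounds(3)[OF assms(1,2,4)] K.KN_in_box_bounds(3)[OF assms(1,2) rotated(1)]
      in \<open>simp_all add: h_def d_def\<close>)
  moreover have "cK * h * rmax * (LG * d) + cG * h * rmax * (LK * d)
      \<le> (cK * LG + cG * LK) * rmax * (h * d + h\<^sup>2)"
  proof -
    have "cK * h * rmax * (LG * d) + cG * h * rmax * (LK * d)
        = (cK * LG + cG * LK) * rmax * (h * d)"
      by (simp add: algebra_simps)
    also have "\<dots> \<le> (cK * LG + cG * LK) * rmax * (h * d + h\<^sup>2)"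
      using K.consts_nonneg G.consts_nonneg assms(2,3) by (intro mult_left_mono) auto
    finally show ?thesis .
  qed
  ultimately show ?thesis
    unfolding h_def[symmetric] d_def[symmetric] by (simp add: algebra_simps)
qed

lemma mult_shift_diff:
  assumes "N > 2" "0 < rmin" "rmin \<le> rmax" "in_box N rmin rmax \<rho>"
  shows "- (cK * vG + cG * vK) * mesh N * (rmax - \<rho> ! 0)
      \<le> KN N (rotate 1 \<rho>) * GN N (rotate 1 \<rho>) - KN N \<rho> * GN N \<rho>"
    and "KN N (rotate 1 \<rho>) * GN N (rotate 1 \<rho>) - KN N \<rho> * GN N \<rho>
      \<le> (cK * vG + cG * vK) * mesh N * (\<rho> ! 0 - rmin)"
proof -
  have "rmin \<le> \<rho> ! 0" "\<rho> ! 0 \<le> rmax"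
    using assms(1,4) unfolding in_box_def by auto
  then have bounds: "- (cK * mesh N * (rmax - \<rho> ! 0) * vG + vK * (cG * mesh N * (rmax - \<rho> ! 0)))
      \<le> KN N (rotate 1 \<rho>) * GN N (rotate 1 \<rho>) - KN N \<rho> * GN N \<rho>"
    "KN N (rotate 1 \<rho>) * GN N (rotate 1 \<rho>) - KN N \<rho> * GN N \<rho>
      \<le> cK * mesh N * (\<rho> ! 0 - rmin) * vG + vK * (cG * mesh N * (\<rho> ! 0 - rmin))"
    using K.shift_diff_lower[OF assms] K.shift_diff_upper[OF assms]
      G.shift_diff_lower[OF assms] G.shift_diff_upper[OF assms]
      K.KN_in_box_bounds[OF assms(1,2,4)]
      G.KN_in_box_bounds[OF assms(1,2) in_box_rotate[OF assms(4), of 1]]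
      K.consts_nonneg(2) G.consts_nonneg(2)
    by (intro mult_diff_bounds[where k = "KN N \<rho>" and k' = "KN N (rotate 1 \<rho>)"
          and g = "GN N \<rho>" and g' = "GN N (rotate 1 \<rho>)" and A = vK and B = vG
          and e = "cK * mesh N * (rmax - \<rho> ! 0)" and E = "cK * mesh N * (\<rho> ! 0 - rmin)"
          and e' = "cG * mesh N * (rmax - \<rho> ! 0)" and E' = "cG * mesh N * (\<rho> ! 0 - rmin)"];
        simp)+
  have "- (cK * vG + cG * vK) * mesh N * (rmax - \<rho> ! 0)
      = - (cK * mesh N * (rmax - \<rho> ! 0) * vG + vK * (cG * mesh N * (rmax - \<rho> ! 0)))"
    "(cK * vG + cG * vK) * mesh N * (\<rho> ! 0 - rmin)
      = cK * mesh N * (\<rho> ! 0 - rmin) * vG + vK * (cG * mesh N * (\<rho> ! 0 - rmin))"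
    using assms(1) by (simp_all add: field_simps)
  with bounds show "- (cK * vG + cG * vK) * mesh N * (rmax - \<rho> ! 0)
      \<le> KN N (rotate 1 \<rho>) * GN N (rotate 1 \<rho>) - KN N \<rho> * GN N \<rho>"
    "KN N (rotate 1 \<rho>) * GN N (rotate 1 \<rho>) - KN N \<rho> * GN N \<rho>
      \<le> (cK * vG + cG * vK) * mesh N * (\<rho> ! 0 - rmin)"
    by simp_all
qed

lemma mult_second_diff:
  assumes "N > 2" "0 < rmin" "rmin \<le> rmax" "in_box N rmin rmax \<rho>"
  shows "\<bar>2 * (KN N (rotate 1 \<rho>) * GN N (rotate 1 \<rho>)) - KN N \<rho> * GN N \<rho>
      - KN N (rotate 2 \<rho>) * GN N (rotate 2 \<rho>)\<bar>
    \<le> (mesh N)\<^sup>2 * (vK * \<gamma>G rmax + vG * \<gamma>K rmax + 2 * (cK * cG) * rmax\<^sup>2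
      + (vK * CG + vG * CK) * linf_diff1 N \<rho>)"
proof -
  define h Y where "h = mesh N" and "Y = linf_diff1 N \<rho>"
  note rotated = in_box_rotate[OF assms(4), of 1]
  have rotate_twice: "rotate 1 (rotate 1 \<rho>) = rotate 2 \<rho>"
    by (simp only: rotate_rotate one_add_one)
  have "\<bar>2 * (KN N (rotate 1 \<rho>) * GN N (rotate 1 \<rho>)) - KN N \<rho> * GN N \<rho>
      - KN N (rotate 2 \<rho>) * GN N (rotate 2 \<rho>)\<bar>
    \<le> vK * (h\<^sup>2 * (\<gamma>G rmax + CG * Y)) + vG * (h\<^sup>2 * (\<gamma>K rmax + CK * Y))
      + 2 * (cK * h * rmax * (cG * h * rmax))"
  proof (rule abs_second_diff_mult_le)
    show "\<bar>KN N (rotate 2 \<rho>) - KN N (rotate 1 \<rho>)\<bar> \<le> cK * h * rmax"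
      using K.abs_shift_diff_le[OF assms(1-3) rotated] unfolding rotate_twice h_def .
    show "\<bar>GN N (rotate 2 \<rho>) - GN N (rotate 1 \<rho>)\<bar> \<le> cG * h * rmax"
      using G.abs_shift_diff_le[OF assms(1-3) rotated] unfolding rotate_twice h_def .
  qed (use K.second_diff[OF assms] G.second_diff[OF assms] K.abs_shift_diff_le[OF assms]
        G.abs_shift_diff_le[OF assms] K.KN_in_box_bounds(3)[OF assms(1,2) rotated]
        G.KN_in_box_bounds(3)[OF assms(1,2) rotated]
      in \<open>simp_all add: h_def Y_def\<close>)
  also have "\<dots> = h\<^sup>2 * (vK * \<gamma>G rmax + vG * \<gamma>K rmax + 2 * (cK * cG) * rmax\<^sup>2
      + (vK * CG + vG * CK) * Y)"
    by (simp add: algebra_simps power2_eq_square)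
  finally show ?thesis
    unfolding h_def Y_def .
qed

lemma mult_third_diff:
  assumes "N > 2" "0 < rmin" "rmin \<le> rmax" "in_box N rmin rmax \<rho>"
  defines "t \<equiv> rmax + linf_diff1 N \<rho>"
  shows "\<bar>3 * (KN N (rotate 1 \<rho>) * GN N (rotate 1 \<rho>)) + KN N (rotate 3 \<rho>) * GN N (rotate 3 \<rho>)
      - KN N \<rho> * GN N \<rho> - 3 * (KN N (rotate 2 \<rho>) * GN N (rotate 2 \<rho>))\<bar>
    \<le> mesh N ^ 3 * (vK * WG t + vG * WK t + 3 * cK * (t * (\<gamma>G t + CG * t))
      + 3 * cG * (t * (\<gamma>K t + CK * t)) + (vK * CG + vG * CK) * linf_diff2 N \<rho>)"
proof -
  define h Y P where "h = mesh N" and "Y = linf_diff1 N \<rho>" and "P = linf_diff2 N \<rho>"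
  have "length \<rho> = N"
    using assms(4) by (simp add: in_box_def)
  then have Y_rotate: "linf_diff1 N (rotate 1 \<rho>) = Y"
    unfolding Y_def by (rule linf_diff1_rotate)
  have "0 \<le> Y"
    using assms(1) unfolding Y_def by (intro linf_diff1_nonneg) simp
  have rotate_sums: "rotate 1 (rotate 1 \<rho>) = rotate 2 \<rho>" "rotate 2 (rotate 1 \<rho>) = rotate 3 \<rho>"
    "rotate 1 (rotate 2 \<rho>) = rotate 3 \<rho>"
    by (simp_all only: rotate_rotate numeral.simps add.commute)
  note rotated = in_box_rotate[OF assms(4), of 1] in_box_rotate[OF assms(4), of 2]
    in_box_rotate[OF assms(4), of 3]
  have "\<bar>3 * (KN N (rotate 1 \<rho>) * GN N (rotate 1 \<rho>)) + KN N (rotate 3 \<rho>) * GN N (rotate 3 \<rho>)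
      - KN N \<rho> * GN N \<rho> - 3 * (KN N (rotate 2 \<rho>) * GN N (rotate 2 \<rho>))\<bar>
    \<le> vK * (h ^ 3 * (WG t + CG * P)) + 3 * (cK * h * rmax * (h\<^sup>2 * (\<gamma>G rmax + CG * Y)))
      + 3 * (h\<^sup>2 * (\<gamma>K rmax + CK * Y) * (cG * h * rmax)) + h ^ 3 * (WK t + CK * P) * vG"
  proof (rule abs_third_diff_mult_le)
    show "\<bar>2 * GN N (rotate 2 \<rho>) - GN N (rotate 1 \<rho>) - GN N (rotate 3 \<rho>)\<bar>
        \<le> h\<^sup>2 * (\<gamma>G rmax + CG * Y)"
      using G.second_diff[OF assms(1-3) rotated(1)] unfolding rotate_sums Y_rotate h_def .
    show "\<bar>GN N (rotate 3 \<rho>) - GN N (rotate 2 \<rho>)\<bar> \<le> cG * h * rmax"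
      using G.abs_shift_diff_le[OF assms(1-3) rotated(2)] unfolding rotate_sums h_def .
  qed (use K.third_diff[OF assms(1-4)] G.third_diff[OF assms(1-4)] K.second_diff[OF assms(1-4)]
        K.abs_shift_diff_le[OF assms(1-4)] K.KN_in_box_bounds(3)[OF assms(1,2,4)]
        G.KN_in_box_bounds(3)[OF assms(1,2) rotated(3)]
      in \<open>simp_all add: h_def Y_def P_def t_def\<close>)
  also have "\<dots> = h ^ 3 * (vK * WG t + vG * WK t + 3 * cK * (rmax * (\<gamma>G rmax + CG * Y))
      + 3 * cG * (rmax * (\<gamma>K rmax + CK * Y)) + (vK * CG + vG * CK) * P)"
    by (simp add: algebra_simps power2_eq_square power3_eq_cube)
  \<comment> \<open>\<open>rmax\<close> and \<open>Y\<close> are both at most \<open>t\<close>, so monotonicity of \<open>\<gamma>\<close> absorbs the cross terms.\<close>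
  also have "\<dots> \<le> h ^ 3 * (vK * WG t + vG * WK t + 3 * cK * (t * (\<gamma>G t + CG * t))
      + 3 * cG * (t * (\<gamma>K t + CK * t)) + (vK * CG + vG * CK) * P)"
    using G.second_diff_bound_mono[of rmax t Y] K.second_diff_bound_mono[of rmax t Y]
      K.consts_nonneg G.consts_nonneg assms(2,3) \<open>0 \<le> Y\<close>
    by (intro mult_left_mono add_mono order.refl) (auto simp: h_def t_def Y_def)
  finally show ?thesis
    unfolding h_def P_def .
qed

lemma mult_node_error:
  assumes "N > 2" "0 < rmin" "rmin \<le> rmax" "in_box N rmin rmax \<rho>" "i < N"
  shows "\<bar>K (PN N \<rho>) (real i * mesh N) * G (PN N \<rho>) (real i * mesh N)
      - KN N (rotate i \<rho>) * GN N (rotate i \<rho>)\<bar> \<le> mesh N * (SK * vG + SG * vK) * rmax"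
proof -
  have "PN N \<rho> \<in> Per"
    using assms(1,2,4) by (intro PN_in_Per) (auto simp: in_box_def)
  then have "\<bar>K (PN N \<rho>) (real i * mesh N) * G (PN N \<rho>) (real i * mesh N)
      - KN N (rotate i \<rho>) * GN N (rotate i \<rho>)\<bar>
    \<le> mesh N * SK * rmax * vG + vK * (mesh N * SG * rmax)"
    using K.KN_in_box_bounds(3)[OF assms(1,2) in_box_rotate[OF assms(4)]]
      G.abs_K_le_vmax K.node_error[OF assms] G.node_error[OF assms]
    by (intro abs_mult_diff_le)
  then show ?thesis
    by (simp add: algebra_simps)
qed

lemma smooth_approx_with_mult:
  "smooth_approx_with (\<lambda>\<sigma> x. K \<sigma> x * G \<sigma> x) (\<lambda>N \<rho>. KN N \<rho> * GN N \<rho>) (vK * vG)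
    (vG * LK + vK * LG) (cK * vG + cG * vK) (vK * CG + vG * CK) (SK * vG + SG * vK)
    (\<lambda>t. vK * \<gamma>G t + vG * \<gamma>K t + 2 * (cK * cG) * t\<^sup>2)
    (\<lambda>t. vG * \<Gamma>K t + vK * \<Gamma>G t + (cK * LG + cG * LK) * t)
    (\<lambda>t. vK * WG t + vG * WK t + 3 * cK * (t * (\<gamma>G t + CG * t))
      + 3 * cG * (t * (\<gamma>K t + CK * t)))"
proof unfold_locales
  show "sup_continuous_on_Per (\<lambda>\<sigma> x. K \<sigma> x * G \<sigma> x)"
    by (rule sup_continuous_on_Per_mult[OF K.sup_continuous G.sup_continuous
          K.abs_K_le_vmax K.vmax_pos G.abs_K_le_vmax G.vmax_pos])
  have mono_square: "mono_on {0..} (\<lambda>t::real. t\<^sup>2)"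
    by (auto simp: mono_on_def intro: power_mono)
  have mono_weighted: "mono_on {0..} (\<lambda>t. t * (\<gamma>G t + CG * t))"
    "mono_on {0..} (\<lambda>t. t * (\<gamma>K t + CK * t))"
    using G.second_diff_bound_mono K.second_diff_bound_mono by (auto intro!: mono_onI)
  show "mono_on {0..} (\<lambda>t. vK * \<gamma>G t + vG * \<gamma>K t + 2 * (cK * cG) * t\<^sup>2)"
    "mono_on {0..} (\<lambda>t. vG * \<Gamma>K t + vK * \<Gamma>G t + (cK * LG + cG * LK) * t)"
    "mono_on {0..} (\<lambda>t. vK * WG t + vG * WK t + 3 * cK * (t * (\<gamma>G t + CG * t))
      + 3 * cG * (t * (\<gamma>K t + CK * t)))"
    using K.vmax_pos G.vmax_pos K.consts_nonneg G.consts_nonneg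
    by (intro mono_on_add mono_on_cmult K.funs_mono G.funs_mono mono_square mono_weighted
        mono_on_ident; simp)+
  show "K \<sigma> x * G \<sigma> x \<le> vK * vG" if "\<sigma> \<in> Per" for \<sigma> x
    using that K.vmax_pos by (intro mult_mono K.K_le_vmax G.K_le_vmax G.K_nonneg) auto
  show "KN N \<rho> * GN N \<rho> \<le> vK * vG" if "N > 2" "length \<rho> = N" "\<forall>j<N. 0 \<le> \<rho> ! j" for N \<rho>
    using that K.vmax_pos by (intro mult_mono K.KN_le_vmax G.KN_le_vmax G.KN_nonneg) auto
qed ((rule mult_lipschitz mult_mixed_diff mult_shift_diff mult_second_diff mult_third_diff
      mult_node_error; assumption)
    | fastforce simp: K.periodic G.periodic K.KN_nonneg G.KN_nonneg K.K_nonneg G.K_nonneg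
        K.vmax_nonneg G.vmax_nonneg K.vmax_pos G.vmax_pos K.consts_nonneg G.consts_nonneg
        K.funs_nonneg G.funs_nonneg
      intro!: add_nonneg_nonneg mult_nonneg_nonneg continuous_intros K.continuous G.continuous)+

lemma smooth_approx_with_add:
  "smooth_approx_with (\<lambda>\<sigma> x. K \<sigma> x + G \<sigma> x) (\<lambda>N \<rho>. KN N \<rho> + GN N \<rho>) (vK + vG)
    (LK + LG) (cK + cG) (CK + CG) (SK + SG)
    (\<lambda>t. \<gamma>K t + \<gamma>G t) (\<lambda>t. \<Gamma>K t + \<Gamma>G t) (\<lambda>t. WK t + WG t)"
proof unfold_locales
  show "sup_continuous_on_Per (\<lambda>\<sigma> x. K \<sigma> x + G \<sigma> x)"
    by (rule sup_continuous_on_Per_add[OF K.sup_continuous G.sup_continuous])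
  show "mono_on {0..} (\<lambda>t. \<gamma>K t + \<gamma>G t)" "mono_on {0..} (\<lambda>t. \<Gamma>K t + \<Gamma>G t)"
    "mono_on {0..} (\<lambda>t. WK t + WG t)"
    by (intro mono_on_add K.funs_mono G.funs_mono)+
  fix N rmin rmax \<rho>
  assume box: "N > 2" "0 < rmin" "rmin \<le> rmax" "in_box N rmin rmax \<rho>"
  show "- (cK + cG) * mesh N * (rmax - \<rho> ! 0)
      \<le> KN N (rotate 1 \<rho>) + GN N (rotate 1 \<rho>) - (KN N \<rho> + GN N \<rho>)"
    "KN N (rotate 1 \<rho>) + GN N (rotate 1 \<rho>) - (KN N \<rho> + GN N \<rho>)
      \<le> (cK + cG) * mesh N * (\<rho> ! 0 - rmin)"
    using K.shift_diff_lower[OF box] G.shift_diff_lower[OF box]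
      K.shift_diff_upper[OF box] G.shift_diff_upper[OF box]
    by (simp_all only: minus_add_distrib distrib_right)
  show "\<bar>2 * (KN N (rotate 1 \<rho>) + GN N (rotate 1 \<rho>)) - (KN N \<rho> + GN N \<rho>)
      - (KN N (rotate 2 \<rho>) + GN N (rotate 2 \<rho>))\<bar>
    \<le> (mesh N)\<^sup>2 * (\<gamma>K rmax + \<gamma>G rmax + (CK + CG) * linf_diff1 N \<rho>)"
    using abs_add_le[OF K.second_diff[OF box] G.second_diff[OF box]] by (simp add: algebra_simps)
  show "\<bar>3 * (KN N (rotate 1 \<rho>) + GN N (rotate 1 \<rho>)) + (KN N (rotate 3 \<rho>) + GN N (rotate 3 \<rho>))
      - (KN N \<rho> + GN N \<rho>) - 3 * (KN N (rotate 2 \<rho>) + GN N (rotate 2 \<rho>))\<bar>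
    \<le> mesh N ^ 3 * (WK (rmax + linf_diff1 N \<rho>) + WG (rmax + linf_diff1 N \<rho>)
      + (CK + CG) * linf_diff2 N \<rho>)"
    using abs_add_le[OF K.third_diff[OF box] G.third_diff[OF box]] by (simp add: algebra_simps)
  show "\<bar>K (PN N \<rho>) (real i * mesh N) + G (PN N \<rho>) (real i * mesh N)
      - (KN N (rotate i \<rho>) + GN N (rotate i \<rho>))\<bar> \<le> mesh N * (SK + SG) * rmax" if "i < N" for i
    using abs_add_le[OF K.node_error[OF box that] G.node_error[OF box that]]
    by (simp add: algebra_simps add_divide_distrib)
  fix \<rho>'
  assume "in_box N rmin rmax \<rho>'"
  note boxes = box this
  show "\<bar>KN N \<rho> + GN N \<rho> - (KN N \<rho>' + GN N \<rho>')\<bar> \<le> (LK + LG) * dist_linf N \<rho> \<rho>'"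
    using abs_add_le[OF K.lipschitz[OF boxes] G.lipschitz[OF boxes]] by (simp add: algebra_simps)
  show "\<bar>KN N \<rho> + GN N \<rho> - (KN N (rotate 1 \<rho>) + GN N (rotate 1 \<rho>)) - (KN N \<rho>' + GN N \<rho>')
      + (KN N (rotate 1 \<rho>') + GN N (rotate 1 \<rho>'))\<bar>
    \<le> (mesh N * dist_linf N \<rho> \<rho>' + (mesh N)\<^sup>2) * (\<Gamma>K rmax + \<Gamma>G rmax)"
    using abs_add_le[OF K.mixed_diff[OF boxes] G.mixed_diff[OF boxes]]
    by (simp add: algebra_simps add_divide_distrib)
qed (fastforce simp: K.periodic G.periodic K.KN_nonneg G.KN_nonneg K.K_nonneg G.K_nonneg
      K.consts_nonneg G.consts_nonneg K.funs_nonneg G.funs_nonneg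
    intro: add_pos_pos add_mono K.vmax_pos G.vmax_pos K.K_le_vmax G.K_le_vmax K.KN_le_vmax
      G.KN_le_vmax continuous_intros K.continuous G.continuous)+

end

text \<open>The bound \<open>vmax\<close> has to be positive, hence \<open>a + 1\<close> rather than \<open>a\<close>.\<close>

lemma smooth_approx_with_const:
  assumes "0 \<le> a"
  shows "smooth_approx_with (\<lambda>\<sigma> x. a) (\<lambda>N \<rho>. a) (a + 1) 0 0 0 0 (\<lambda>t. 0) (\<lambda>t. 0) (\<lambda>t. 0)"
proof unfold_locales
  show "sup_continuous_on_Per (\<lambda>\<sigma> x. a)"
    unfolding sup_continuous_on_Per_def by (auto intro: exI[of _ 1])
qed (use assms in \<open>auto simp: mono_on_const\<close>)

theorem lemma2p2:
  fixes K G :: "(real \<Rightarrow> real) \<Rightarrow> (real \<Rightarrow> real)"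
    and KN GN :: "nat \<Rightarrow> real list \<Rightarrow> real"
    and lam :: real
  assumes "\<forall>\<rho>\<in>Per. K \<rho> \<in> Per" and "\<forall>\<rho>\<in>Per. G \<rho> \<in> Per"
    and "smooth_approx K KN" and "smooth_approx G GN"
    and "lam \<ge> 0"
  shows "smooth_approx (\<lambda>\<rho> x. K \<rho> x * G \<rho> x) (\<lambda>N \<rho>. KN N \<rho> * GN N \<rho>)
       \<and> smooth_approx (\<lambda>\<rho> x. K \<rho> x + G \<rho> x) (\<lambda>N \<rho>. KN N \<rho> + GN N \<rho>)
       \<and> smooth_approx (\<lambda>\<rho> x. lam * K \<rho> x) (\<lambda>N \<rho>. lam * KN N \<rho>)"
proof -
  obtain vK LK cK CK SK \<gamma>K \<Gamma>K WK where K: "smooth_approx_with K KN vK LK cK CK SK \<gamma>K \<Gamma>K WK"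
    using assms(3) smooth_approx_iff_with by blast
  obtain vG LG cG CG SG \<gamma>G \<Gamma>G WG where G: "smooth_approx_with G GN vG LG cG CG SG \<gamma>G \<Gamma>G WG"
    using assms(4) smooth_approx_iff_with by blast
  interpret KG: smooth_approx_pair K KN vK LK cK CK SK \<gamma>K \<Gamma>K WK G GN vG LG cG CG SG \<gamma>G \<Gamma>G WG
    using K G by (rule smooth_approx_pair.intro)
  interpret lamK: smooth_approx_pair "\<lambda>\<sigma> x. lam" "\<lambda>N \<rho>. lam" "lam + 1" 0 0 0 0 "\<lambda>t. 0"
      "\<lambda>t. 0" "\<lambda>t. 0" K KN vK LK cK CK SK \<gamma>K \<Gamma>K WK
    using smooth_approx_with_const[OF assms(5)] K by (rule smooth_approx_pair.intro)
  show ?thesis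
    using KG.smooth_approx_with_mult KG.smooth_approx_with_add lamK.smooth_approx_with_mult
    by (auto intro: smooth_approx_with.smooth_approx)
qed

end
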